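(* Let $S$ be a finite set and $f:S\to\mathbb{Z}_3$ a function such that, for some ordering $a,b,c$ of the elements of $\mathbb{Z}_3$, $|f^{-1}(a)|=\frac{2}{3}|S|$ and $|f^{-1}(b)|=|f^{-1}(c)|=\frac16|S|$. Let $\omega=e^{2\pi i/3}$, $\phi=\frac{1}{\sqrt3}\sum_{h\in\mathbb{Z}_3}\omega^{-h}|h\rangle$, $u_S=|S|^{-1/2}\sum_s|s\rangle$, $U_f(|s\rangle\otimes|g\rangle)=|s\rangle\otimes|f(s)+g\rangle$, $D=\mathrm{id}-\frac{2}{|S|}\sum_{s,t}|s\rangle\langle t|$ on $\mathbb{C}[S]$, and $\psi=(D\otimes\mathrm{id})U_f(u_S\otimes\phi)$. Then for every $s\in S$ with $f(s)=a$ one has $(\langle s|\otimes\mathrm{id})\psi=0$; hence measuring the first factor of $\psi$ in the basis $\{|s\rangle\}$ returns, with certainty, an element $s$ with $f(s)\in\{b,c\}$.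
   Context: $\mathbb{C}[X]$ denotes the Hilbert space with orthonormal basis $\{|x\rangle : x\in X\}$ for a finite set $X$; $\mathbb{Z}_3$ is the integers mod 3 under addition. *)

theory Defs
  imports "HOL-Analysis.Analysis" "HOL-Library.Numeral_Type"
begin

text \<open>Z_3 is the finite ring type 3 (HOL-Library.Numeral_Type).
  Vectors of C[S] tensor C[Z_3] are functions on pairs (s,g), supported on S.
  Rep_bit1 h is the integer representative of h in {0,1,2}.\<close>

definition omega3 :: complex where
  "omega3 = exp (2 * pi * \<i> / 3)"

definition phi3 :: "3 \<Rightarrow> complex" where
  "phi3 h = (1 / sqrt 3) * omega3 powi (- Rep_bit1 h)"

definition init_state :: "'s set \<Rightarrow> ('s \<times> 3 \<Rightarrow> complex)" where
  "init_state S = (\<lambda>(s, g). if s \<in> S then (1 / sqrt (real (card S))) * phi3 g else 0)"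

text \<open>U_f (|s> tensor |g>) = |s> tensor |f(s)+g>, i.e. (U_f v)(s,g) = v(s, g - f s).\<close>
definition U_oracle :: "'s set \<Rightarrow> ('s \<Rightarrow> 3) \<Rightarrow> ('s \<times> 3 \<Rightarrow> complex) \<Rightarrow> ('s \<times> 3 \<Rightarrow> complex)" where
  "U_oracle S f v = (\<lambda>(s, g). if s \<in> S then v (s, g - f s) else v (s, g))"

definition D_tensor_id :: "'s set \<Rightarrow> ('s \<times> 3 \<Rightarrow> complex) \<Rightarrow> ('s \<times> 3 \<Rightarrow> complex)" where
  "D_tensor_id S v = (\<lambda>(s, g). if s \<in> S
      then v (s, g) - (2 / of_nat (card S)) * (\<Sum>t\<in>S. v (t, g)) else v (s, g))"

definition psi_state :: "'s set \<Rightarrow> ('s \<Rightarrow> 3) \<Rightarrow> ('s \<times> 3 \<Rightarrow> complex)" where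
  "psi_state S f = D_tensor_id S (U_oracle S f (init_state S))"

end

theory Submission
  imports Defs
begin

text \<open>
  Write \<open>n = |S|\<close> and \<open>r = 1/sqrt n\<close>.  After applying \<open>U\<^sub>f\<close>, the amplitude of
  \<open>(s, g)\<close> is \<open>r \<cdot> \<phi>(g - f s)\<close>, so for \<open>s \<in> S\<close> the state \<open>\<psi>\<close> has amplitude
  \<open>r \<cdot> (\<phi>(g - f s) - (2/n) \<Sum>\<^sub>t \<phi>(g - f t))\<close>.  Grouping the column sum by the value
  of \<open>f\<close> and using that the three shifted values of \<open>\<phi>\<close> sum to zero, the prescribed
  fibre sizes \<open>2n/3, n/6, n/6\<close> make the column sum equal to \<open>(n/2) \<phi>(g - a)\<close>.
  Hence \<open>\<psi>(s, g) = r (\<phi>(g - f s) - \<phi>(g - a))\<close>, which vanishes when \<open>f s = a\<close>; when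
  \<open>f s \<noteq> a\<close> each of the three terms has squared modulus \<open>1/n\<close>, and the \<open>n/3\<close> elements
  of \<open>f\<^sup>-\<^sup>1{b, c}\<close> carry total probability one.
\<close>

lemma UNIV_3: "(UNIV :: 3 set) = {0, 1, 2}"
proof -
  have "x = 0 \<or> x = 1 \<or> x = 2" for x :: 3
  proof (cases x)
    case (of_int z)
    then have "z = 0 \<or> z = 1 \<or> z = 2" by auto
    then show ?thesis using of_int by auto
  qed
  then show ?thesis by auto
qed

lemma UNIV_3_distinct:
  assumes "distinct [a, b, c :: 3]"
  shows "UNIV = {a, b, c}"
proof -
  have "card {a, b, c} = card (UNIV :: 3 set)" using assms by simp
  then show ?thesis by (metis card_subset_eq finite subset_UNIV)
qed

text \<open>Explicit coordinates of \<open>\<omega>\<close>, \<open>\<omega>\<^sup>-\<^sup>1\<close> and of the three entries of \<open>\<phi>\<close>;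
  the identities below about \<open>\<phi>\<close> are then finite computations.\<close>
lemma omega3_eq: "omega3 = Complex (-1/2) (sqrt 3 / 2)"
  unfolding omega3_def
  by (simp add: complex_eq_iff exp_eq_polar cos_120' sin_120' mult.commute)

lemma inverse_omega3: "inverse omega3 = Complex (-1/2) (- sqrt 3 / 2)"
  by (rule inverse_unique) (simp add: omega3_eq complex_eq_iff)

lemma Rep_3: "Rep_bit1 (0::3) = 0" "Rep_bit1 (1::3) = 1" "Rep_bit1 (2::3) = 2"
  by (simp_all add: bit1.Rep_0 bit1.Rep_1 bit1.Rep_numeral)

lemma phi3_values:
  "phi3 0 = Complex (1 / sqrt 3) 0"
  "phi3 1 = Complex (-1 / (2 * sqrt 3)) (-1/2)"
  "phi3 2 = Complex (-1 / (2 * sqrt 3)) (1/2)"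
proof -
  show "phi3 0 = Complex (1 / sqrt 3) 0"
    by (simp add: phi3_def Rep_3 complex_eq_iff)
  show "phi3 1 = Complex (-1 / (2 * sqrt 3)) (-1/2)"
    by (simp add: phi3_def Rep_3 power_int_def inverse_omega3 complex_eq_iff)
  show "phi3 2 = Complex (-1 / (2 * sqrt 3)) (1/2)"
    by (simp add: phi3_def Rep_3 power_int_def inverse_omega3 complex_eq_iff power2_eq_square)
qed

lemma sum_phi3: "(\<Sum>h\<in>UNIV. phi3 h) = 0"
proof -
  have "(\<Sum>h\<in>UNIV. phi3 h) = phi3 0 + phi3 1 + phi3 2"
    unfolding UNIV_3 by simp
  then show ?thesis by (simp add: phi3_values complex_eq_iff)
qed

text \<open>Consequently \<open>\<phi>(g - a) + \<phi>(g - b) + \<phi>(g - c) = 0\<close> for distinct \<open>a, b, c\<close>,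
  since \<open>x \<mapsto> g - x\<close> permutes \<open>\<int>\<^sub>3\<close>.\<close>
lemma phi3_shift_sum:
  assumes "distinct [a, b, c :: 3]"
  shows "phi3 (g - a) + phi3 (g - b) + phi3 (g - c) = 0"
proof -
  have "phi3 (g - a) + phi3 (g - b) + phi3 (g - c) = (\<Sum>x\<in>UNIV. phi3 (g - x))"
    unfolding UNIV_3_distinct[OF assms] using assms by (simp add: add.assoc)
  also have "\<dots> = (\<Sum>h\<in>UNIV. phi3 h)"
    by (rule sum.reindex_bij_witness[where i = "\<lambda>h. g - h" and j = "\<lambda>h. g - h"]) auto
  finally show ?thesis by (simp add: sum_phi3)
qed

lemma phi3_dist:
  assumes "p \<noteq> q"
  shows "(cmod (phi3 p - phi3 q))\<^sup>2 = 1"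
proof -
  have "(cmod (phi3 p - phi3 q))\<^sup>2
        = (Re (phi3 p) - Re (phi3 q))\<^sup>2 + (Im (phi3 p) - Im (phi3 q))\<^sup>2"
    by (simp add: cmod_power2)
  moreover have "p \<in> {0, 1, 2}" and "q \<in> {0, 1, 2}" using UNIV_3 by auto
  ultimately show ?thesis
    using assms by (elim insertE emptyE) (simp_all add: phi3_values power2_eq_square field_simps)
qed

lemma fibre_weighted_sum:
  fixes f :: "'s \<Rightarrow> 3" and h :: "3 \<Rightarrow> 'b :: field_char_0"
  assumes "finite S" and abc: "distinct [a, b, c]" and h0: "h a + h b + h c = 0"
    and "3 * card {s \<in> S. f s = a} = 2 * card S"
    and "6 * card {s \<in> S. f s = b} = card S"
    and "6 * card {s \<in> S. f s = c} = card S"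
  shows "(\<Sum>t\<in>S. h (f t)) = of_nat (card S) / 2 * h a"
proof -
  let ?k = "\<lambda>x. of_nat (card {s \<in> S. f s = x}) :: 'b"
  let ?n = "of_nat (card S) :: 'b"
  have "3 * ?k a = 2 * ?n" "6 * ?k b = ?n" "6 * ?k c = ?n"
    using assms(4-6)[THEN arg_cong[where f = "of_nat :: nat \<Rightarrow> 'b"]] by simp_all
  then have ka: "?k a = 2 / 3 * ?n" and kb: "?k b = ?n / 6" and kc: "?k c = ?n / 6"
    by (simp_all add: eq_divide_eq mult.commute)
  have "(\<Sum>t\<in>S. h (f t)) = (\<Sum>x\<in>UNIV. \<Sum>t\<in>{s \<in> S. f s = x}. h (f t))"
    using \<open>finite S\<close> by (rule sum.group[symmetric]) auto
  also have "\<dots> = (\<Sum>x\<in>UNIV. ?k x * h x)" by simp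
  also have "\<dots> = ?k a * h a + ?k b * h b + ?k c * h c"
    unfolding UNIV_3_distinct[OF abc] using abc by (simp add: add.assoc)
  also have "\<dots> = ?n / 2 * h a + ?n / 6 * (h a + h b + h c)"
    unfolding ka kb kc by (simp add: field_simps)
  finally show ?thesis using h0 by simp
qed

lemma psi_state_eq:
  assumes "s \<in> S"
  shows "psi_state S f (s, g) = (1 / sqrt (card S)) *
           (phi3 (g - f s) - 2 / of_nat (card S) * (\<Sum>t\<in>S. phi3 (g - f t)))"
proof -
  let ?r = "complex_of_real (1 / sqrt (card S))"
  have after_Uf: "U_oracle S f (init_state S) (t, g) = ?r * phi3 (g - f t)" if "t \<in> S" for t
    using that by (simp add: U_oracle_def init_state_def)
  have "psi_state S f (s, g)
        = ?r * phi3 (g - f s) - 2 / of_nat (card S) * (\<Sum>t\<in>S. ?r * phi3 (g - f t))"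
    using assms after_Uf by (simp add: psi_state_def D_tensor_id_def)
  also have "\<dots> = ?r * (phi3 (g - f s) - 2 / of_nat (card S) * (\<Sum>t\<in>S. phi3 (g - f t)))"
    by (simp only: sum_distrib_left[symmetric] right_diff_distrib mult.left_commute)
  finally show ?thesis .
qed

lemma psi_state_collapse:
  assumes "finite S" and abc: "distinct [a, b, c]"
    and "3 * card {s \<in> S. f s = a} = 2 * card S"
    and "6 * card {s \<in> S. f s = b} = card S"
    and "6 * card {s \<in> S. f s = c} = card S"
    and "s \<in> S"
  shows "psi_state S f (s, g) = (1 / sqrt (card S)) * (phi3 (g - f s) - phi3 (g - a))"
proof -
  have "card S > 0" using \<open>finite S\<close> \<open>s \<in> S\<close> card_gt_0_iff by blast
  have "(\<Sum>t\<in>S. phi3 (g - f t)) = of_nat (card S) / 2 * phi3 (g - a)"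
    using fibre_weighted_sum[where h = "\<lambda>x. phi3 (g - x)", OF assms(1) abc
        phi3_shift_sum[OF abc] assms(3-5)] .
  with \<open>card S > 0\<close> have "2 / of_nat (card S) * (\<Sum>t\<in>S. phi3 (g - f t)) = phi3 (g - a)"
    by (simp add: field_simps)
  then show ?thesis using psi_state_eq[OF \<open>s \<in> S\<close>, of f g] by simp
qed

lemma psi_state_row_mass:
  assumes "finite S" and "distinct [a, b, c]"
    and "3 * card {s \<in> S. f s = a} = 2 * card S"
    and "6 * card {s \<in> S. f s = b} = card S"
    and "6 * card {s \<in> S. f s = c} = card S"
    and "s \<in> S" and "f s \<noteq> a"
  shows "(\<Sum>g\<in>UNIV. (cmod (psi_state S f (s, g)))\<^sup>2) = 3 / card S"
proof -
  have "(cmod (psi_state S f (s, g)))\<^sup>2 = (cmod (phi3 (g - f s) - phi3 (g - a)))\<^sup>2 / card S"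
    for g
    using psi_state_collapse[OF assms(1-6)] by (simp add: norm_divide power_divide)
  then have "(\<Sum>g\<in>UNIV. (cmod (psi_state S f (s, g)))\<^sup>2)
             = (\<Sum>g\<in>UNIV. (cmod (phi3 (g - f s) - phi3 (g - a)))\<^sup>2) / card S"
    by (simp add: sum_divide_distrib)
  also have "\<dots> = 3 / card S"
    using \<open>f s \<noteq> a\<close> by (simp add: phi3_dist)
  finally show ?thesis .
qed

theorem mainTheorem9:
  fixes S :: "'s set" and f :: "'s \<Rightarrow> 3" and a b c :: 3
  assumes "finite S" and "S \<noteq> {}"
    and "distinct [a, b, c]"
    and "3 * card {s \<in> S. f s = a} = 2 * card S"
    and "6 * card {s \<in> S. f s = b} = card S"
    and "6 * card {s \<in> S. f s = c} = card S"
  shows "(\<forall>s\<in>S. f s = a \<longrightarrow> (\<forall>g. psi_state S f (s, g) = 0))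
         \<and> (\<Sum>s\<in>{s\<in>S. f s \<in> {b, c}}. \<Sum>g\<in>UNIV. (cmod (psi_state S f (s, g)))\<^sup>2) = 1"
proof
  show "\<forall>s\<in>S. f s = a \<longrightarrow> (\<forall>g. psi_state S f (s, g) = 0)"
    using psi_state_collapse[OF assms(1,3-6)] by simp
  let ?BC = "{s \<in> S. f s \<in> {b, c}}"
  have "card ?BC = card {s \<in> S. f s = b} + card {s \<in> S. f s = c}"
    using \<open>finite S\<close> \<open>distinct [a, b, c]\<close>
    by (subst card_Un_disjoint[symmetric]) (auto intro: arg_cong[where f = card])
  then have "3 * real (card ?BC) = real (card S)"
    using assms(5,6) by linarith
  moreover have "card S > 0" using assms(1,2) by (simp add: card_gt_0_iff)
  moreover have "(\<Sum>s\<in>?BC. \<Sum>g\<in>UNIV. (cmod (psi_state S f (s, g)))\<^sup>2) = (\<Sum>s\<in>?BC. 3 / card S)"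
    using psi_state_row_mass[OF assms(1,3-6)] \<open>distinct [a, b, c]\<close> by (intro sum.cong) auto
  ultimately show "(\<Sum>s\<in>?BC. \<Sum>g\<in>UNIV. (cmod (psi_state S f (s, g)))\<^sup>2) = 1"
    by (simp add: field_simps)
qed

end
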